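(* Let $n\ge3$ and let $G$ be a connected graph with at least two vertices, and assume it is not the case that both $G\cong K_2$ and $n=3$. Then $G\times K_n$ is super edge connected if and only if $n\,\kappa'(G)>\delta(G)$.
   Context: All graphs are finite, simple and undirected. $\kappa'(G)$ denotes edge connectivity and $\delta(G)$ minimum degree. The direct product $G\times H$ has vertex set $V(G)\times V(H)$. Two vertices $(x,u),(y,v)$ are adjacent if and only if $xy\in E(G)$ and $uv\in E(H)$. A minimum edge cut of a graph is a set of edges whose removal disconnects the graph and whose cardinality equals its edge connectivity. A graph is super edge connected if every minimum edge cut is the set of all edges incident with some single vertex. *)

theory Defs
  imports Main
begin

definition simple_graph :: "'a set \<Rightarrow> 'a set set \<Rightarrow> bool" where
  "simple_graph V E \<longleftrightarrow> finite V \<and>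
     (\<forall>e\<in>E. \<exists>x y. x \<noteq> y \<and> x \<in> V \<and> y \<in> V \<and> e = {x, y})"

definition adj :: "'a set set \<Rightarrow> 'a \<Rightarrow> 'a \<Rightarrow> bool" where
  "adj E x y \<longleftrightarrow> {x, y} \<in> E"

definition connected_graph :: "'a set \<Rightarrow> 'a set set \<Rightarrow> bool" where
  "connected_graph V E \<longleftrightarrow> V \<noteq> {} \<and>
     (\<forall>x\<in>V. \<forall>y\<in>V. (\<lambda>a b. a \<in> V \<and> b \<in> V \<and> adj E a b)\<^sup>*\<^sup>* x y)"

definition incident_edges :: "'a set set \<Rightarrow> 'a \<Rightarrow> 'a set set" where
  "incident_edges E v = {e \<in> E. v \<in> e}"

definition degree :: "'a set set \<Rightarrow> 'a \<Rightarrow> nat" where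
  "degree E v = card (incident_edges E v)"

definition min_degree :: "'a set \<Rightarrow> 'a set set \<Rightarrow> nat" where
  "min_degree V E = Min (degree E ` V)"

definition is_edge_cut :: "'a set \<Rightarrow> 'a set set \<Rightarrow> 'a set set \<Rightarrow> bool" where
  "is_edge_cut V E S \<longleftrightarrow> S \<subseteq> E \<and> \<not> connected_graph V (E - S)"

definition edge_connectivity :: "'a set \<Rightarrow> 'a set set \<Rightarrow> nat" where
  "edge_connectivity V E = Min (card ` {S. is_edge_cut V E S})"

definition is_min_edge_cut :: "'a set \<Rightarrow> 'a set set \<Rightarrow> 'a set set \<Rightarrow> bool" where
  "is_min_edge_cut V E S \<longleftrightarrow> is_edge_cut V E S \<and> card S = edge_connectivity V E"

definition super_edge_connected :: "'a set \<Rightarrow> 'a set set \<Rightarrow> bool" where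
  "super_edge_connected V E \<longleftrightarrow>
     (\<forall>S. is_min_edge_cut V E S \<longrightarrow> (\<exists>v\<in>V. S = incident_edges E v))"

definition dprod_verts :: "'a set \<Rightarrow> 'b set \<Rightarrow> ('a \<times> 'b) set" where
  "dprod_verts V W = V \<times> W"

definition dprod_edges :: "'a set set \<Rightarrow> 'b set set \<Rightarrow> ('a \<times> 'b) set set" where
  "dprod_edges E F = {{(x, u), (y, v)} | x y u v. {x, y} \<in> E \<and> {u, v} \<in> F}"

definition K_verts :: "nat \<Rightarrow> nat set" where
  "K_verts n = {..<n}"

definition K_edges :: "nat \<Rightarrow> nat set set" where
  "K_edges n = {{i, j} | i j. i < n \<and> j < n \<and> i \<noteq> j}"

definition graph_iso :: "'a set \<Rightarrow> 'a set set \<Rightarrow> 'b set \<Rightarrow> 'b set set \<Rightarrow> bool" where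
  "graph_iso V E W F \<longleftrightarrow> (\<exists>f. bij_betw f V W \<and>
     (\<forall>x\<in>V. \<forall>y\<in>V. {x, y} \<in> E \<longleftrightarrow> {f x, f y} \<in> F))"

end

theory Submission
  imports Defs
begin

text \<open>Write H for G \<times> K_n. For a vertex set X of H, the edges of its boundary lying above an
  edge xy of G correspond to the pairs (u, v) of distinct vertices of K_n with (x, u) and (y, v)
  on different sides of X; counting such pairs shows that the boundary of X has at least
  n (n - 1) \<kappa>'(G) edges if every fibre of X is empty or full, at least (n - 1) deg x edges
  if the fibre over x is split, and more than (n - 1) \<delta>(G) edges if two fibres are split
  (here G = K_2 with n = 3 must be excluded). The star of a vertex (x, u) with deg x = \<delta>(G) has
  (n - 1) \<delta>(G) edges, so if n \<kappa>'(G) > \<delta>(G) a minimum cut of H bounds a set X with exactly one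
  split fibre and no boundary edges beyond the forced ones, and X or its complement is a single
  vertex. If n \<kappa>'(G) \<le> \<delta>(G), the cylinder over a minimum cut of G is a minimum cut of H
  containing two disjoint edges.\<close>

section \<open>Cross pairs in complete graphs\<close>

text \<open>If A and B are the fibres of a vertex set X of G \<times> K_n over the ends of an edge xy
  of G, then (u, v) is a cross pair exactly when the edge (x, u)(y, v) leaves X.\<close>

definition cross_pairs :: "nat \<Rightarrow> nat set \<Rightarrow> nat set \<Rightarrow> (nat \<times> nat) set" where
  "cross_pairs n A B = {(u, v). u < n \<and> v < n \<and> u \<noteq> v \<and> (u \<in> A \<longleftrightarrow> v \<notin> B)}"

lemma finite_cross_pairs: "finite (cross_pairs n A B)"
  by (rule finite_subset[of _ "{..<n} \<times> {..<n}"]) (auto simp: cross_pairs_def)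

lemma cross_pairs_complement:
  "cross_pairs n ({..<n} - A) ({..<n} - B) = cross_pairs n A B"
  by (auto simp: cross_pairs_def)

lemma card_cross_pairs_empty_full:
  "card (cross_pairs n {..<n} {}) = n * n - n"
proof -
  have "cross_pairs n {..<n} {} = {..<n} \<times> {..<n} - (\<lambda>u. (u, u)) ` {..<n}"
    by (auto simp: cross_pairs_def)
  moreover have "card ((\<lambda>u. (u, u)) ` {..<n}) = n"
    by (subst card_image) (auto simp: inj_on_def)
  ultimately show ?thesis
    by (simp add: card_Diff_subset card_cartesian_product image_subset_iff)
qed

lemma partners_subset_snd_cross_pairs:
  assumes "T \<subseteq> {..<n}" and "\<And>v. v \<in> T \<Longrightarrow> \<exists>u<n. u \<noteq> v \<and> (u \<in> A \<longleftrightarrow> v \<notin> B)"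
  shows "T \<subseteq> snd ` cross_pairs n A B"
proof
  fix v assume "v \<in> T"
  then obtain u where "u < n" "u \<noteq> v" "u \<in> A \<longleftrightarrow> v \<notin> B" using assms(2) by blast
  then have "(u, v) \<in> cross_pairs n A B"
    using assms(1) \<open>v \<in> T\<close> by (auto simp: cross_pairs_def)
  then show "v \<in> snd ` cross_pairs n A B" by (rule rev_image_eqI) simp
qed

lemma card_cross_pairs_ge:
  assumes "T \<subseteq> {..<n}" and "\<And>v. v \<in> T \<Longrightarrow> \<exists>u<n. u \<noteq> v \<and> (u \<in> A \<longleftrightarrow> v \<notin> B)"
  shows "card T \<le> card (cross_pairs n A B)"
proof -
  have "card T \<le> card (snd ` cross_pairs n A B)"
    using partners_subset_snd_cross_pairs[OF assms]
    by (intro card_mono finite_imageI finite_cross_pairs)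
  also have "\<dots> \<le> card (cross_pairs n A B)"
    by (rule card_image_le[OF finite_cross_pairs])
  finally show ?thesis .
qed

lemma card_cross_pairs_gt:
  assumes "T \<subseteq> {..<n}" and "\<And>v. v \<in> T \<Longrightarrow> \<exists>u<n. u \<noteq> v \<and> (u \<in> A \<longleftrightarrow> v \<notin> B)"
    and "(u, v) \<in> cross_pairs n A B" "(u', v) \<in> cross_pairs n A B" "u \<noteq> u'"
  shows "card T < card (cross_pairs n A B)"
proof -
  have "card T \<le> card (snd ` cross_pairs n A B)"
    using partners_subset_snd_cross_pairs[OF assms(1,2)]
    by (intro card_mono finite_imageI finite_cross_pairs)
  also have "\<dots> < card (cross_pairs n A B)"
  proof -
    have "\<not> inj_on snd (cross_pairs n A B)"
      using assms(3-5) unfolding inj_on_def by fastforce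
    then show ?thesis
      using card_image_le[OF finite_cross_pairs] eq_card_imp_inj_on[OF finite_cross_pairs]
      by (metis le_neq_implies_less)
  qed
  finally show ?thesis .
qed

text \<open>At most one vertex v0 lacks a partner: a second one would force A to be empty or full.\<close>

lemma cross_pairs_partner_exists:
  fixes n :: nat
  assumes "3 \<le> n" "A \<subseteq> {..<n}" "A \<noteq> {}" "A \<noteq> {..<n}"
    and v0: "v0 < n" "\<forall>u<n. u \<noteq> v0 \<longrightarrow> (u \<in> A \<longleftrightarrow> v0 \<in> B)"
    and v: "v < n" "v \<noteq> v0"
  shows "\<exists>u<n. u \<noteq> v \<and> (u \<in> A \<longleftrightarrow> v \<notin> B)"
proof (rule ccontr)
  assume "\<not> ?thesis"
  then have no: "\<forall>u<n. u \<noteq> v \<longrightarrow> (u \<in> A \<longleftrightarrow> v \<in> B)" by blast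
  have "\<exists>w<n. w \<noteq> v \<and> w \<noteq> v0" using assms(1) by presburger
  then obtain w where w: "w < n" "w \<noteq> v" "w \<noteq> v0" by blast
  have "u \<in> A \<longleftrightarrow> w \<in> A" if "u < n" for u
    using no v0 v w that by (cases "u = v"; cases "u = v0") auto
  then show False using assms(2-4) w(1) by auto
qed

lemma card_cross_pairs_partial:
  assumes "3 \<le> n" "A \<subseteq> {..<n}" "A \<noteq> {}" "A \<noteq> {..<n}"
  shows "n - 1 \<le> card (cross_pairs n A B)"
proof (cases "\<forall>v<n. \<exists>u<n. u \<noteq> v \<and> (u \<in> A \<longleftrightarrow> v \<notin> B)")
  case True
  then show ?thesis using card_cross_pairs_ge[of "{..<n}" n A B] by auto
next
  case False
  then obtain v0 where v0: "v0 < n" "\<forall>u<n. u \<noteq> v0 \<longrightarrow> (u \<in> A \<longleftrightarrow> v0 \<in> B)" by blast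
  have "card ({..<n} - {v0}) \<le> card (cross_pairs n A B)"
    by (rule card_cross_pairs_ge) (use cross_pairs_partner_exists[OF assms v0] in auto)
  then show ?thesis using v0(1) by simp
qed

lemma two_elements_avoiding:
  "4 \<le> (n::nat) \<Longrightarrow> \<exists>u u'. u < n \<and> u' < n \<and> u \<noteq> u' \<and> u \<noteq> a \<and> u \<noteq> b \<and> u' \<noteq> a \<and> u' \<noteq> b"
  by presburger

lemma card_cross_pairs_two_partial:
  assumes "4 \<le> n" "A \<subseteq> {..<n}" "A \<noteq> {}" "A \<noteq> {..<n}"
    and "B \<subseteq> {..<n}" "B \<noteq> {}" "B \<noteq> {..<n}"
  shows "n \<le> card (cross_pairs n A B)"
proof (cases "\<forall>v<n. \<exists>u<n. u \<noteq> v \<and> (u \<in> A \<longleftrightarrow> v \<notin> B)")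
  case True
  then show ?thesis using card_cross_pairs_ge[of "{..<n}" n A B] by auto
next
  case False
  then obtain v0 where v0: "v0 < n" "\<forall>u<n. u \<noteq> v0 \<longrightarrow> (u \<in> A \<longleftrightarrow> v0 \<in> B)" by blast
  have partners: "\<exists>u<n. u \<noteq> v \<and> (u \<in> A \<longleftrightarrow> v \<notin> B)" if "v \<in> {..<n} - {v0}" for v
    using cross_pairs_partner_exists[OF _ assms(2-4) v0] that assms(1) by simp
  \<comment> \<open>every u other than v0 and t is a partner of t\<close>
  obtain t where t: "t < n" "t \<in> B \<longleftrightarrow> v0 \<notin> B"
  proof (cases "v0 \<in> B")
    case True
    then show ?thesis using that assms(5,7) by blast
  next
    case False
    then show ?thesis using that assms(5,6) by blast
  qed
  obtain u u' where uu': "u < n" "u' < n" "u \<noteq> u'" "u \<noteq> v0" "u \<noteq> t" "u' \<noteq> v0" "u' \<noteq> t"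
    using two_elements_avoiding[OF assms(1)] by blast
  have "u \<in> A \<longleftrightarrow> v0 \<in> B" "u' \<in> A \<longleftrightarrow> v0 \<in> B"
    using v0(2) uu' by simp_all
  then have "(u, t) \<in> cross_pairs n A B" "(u', t) \<in> cross_pairs n A B"
    using uu' t by (simp_all add: cross_pairs_def)
  then have "card ({..<n} - {v0}) < card (cross_pairs n A B)"
    by (intro card_cross_pairs_gt[OF _ partners _ _ uu'(3)]) auto
  then show ?thesis using v0(1) by simp
qed

lemma card_cross_pairs_empty:
  assumes "A \<subseteq> {..<n}" "u \<in> A" "u' \<in> A" "u \<noteq> u'" "t < n" "t \<notin> A"
  shows "n \<le> card (cross_pairs n A {})"
proof -
  have "(u, t) \<in> cross_pairs n A {}" "(u', t) \<in> cross_pairs n A {}"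
    using assms by (auto simp: cross_pairs_def)
  moreover have "\<exists>w<n. w \<noteq> v \<and> (w \<in> A \<longleftrightarrow> v \<notin> {})" for v
    using assms(1-4) by (cases "v = u") auto
  ultimately have "card {..<n} < card (cross_pairs n A {})"
    by (intro card_cross_pairs_gt[OF subset_refl _ _ _ assms(4)]) auto
  then show ?thesis by simp
qed

section \<open>Edge boundaries and edge cuts\<close>

definition edge_boundary :: "'b set set \<Rightarrow> 'b set \<Rightarrow> 'b set set" where
  "edge_boundary F X = {h \<in> F. \<exists>p q. h = {p, q} \<and> p \<in> X \<and> q \<notin> X}"

abbreviation graph_step :: "'b set \<Rightarrow> 'b set set \<Rightarrow> 'b \<Rightarrow> 'b \<Rightarrow> bool" where
  "graph_step W F \<equiv> \<lambda>a b. a \<in> W \<and> b \<in> W \<and> adj F a b"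

lemma is_edge_cut_edge_boundary:
  assumes "X \<subseteq> W" "a \<in> X" "b \<in> W" "b \<notin> X"
  shows "is_edge_cut W F (edge_boundary F X)"
proof -
  have "z \<in> X" if "(graph_step W (F - edge_boundary F X))\<^sup>*\<^sup>* a z" for z
    using that
  proof (induction rule: rtranclp_induct)
    case base then show ?case using assms by simp
  next
    case (step y z)
    then show ?case unfolding adj_def edge_boundary_def by blast
  qed
  then show ?thesis
    unfolding is_edge_cut_def connected_graph_def edge_boundary_def using assms by blast
qed

lemma edge_cut_contains_edge_boundary:
  assumes "W \<noteq> {}" "\<forall>h\<in>F. h \<subseteq> W" "is_edge_cut W F S"
  obtains X where "X \<subseteq> W" "X \<noteq> {}" "W - X \<noteq> {}" "edge_boundary F X \<subseteq> S"
proof -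
  obtain a b where ab: "a \<in> W" "b \<in> W" "\<not> (graph_step W (F - S))\<^sup>*\<^sup>* a b"
    using assms unfolding is_edge_cut_def connected_graph_def by blast
  define X where "X = {z. (graph_step W (F - S))\<^sup>*\<^sup>* a z}"
  have "X \<subseteq> W"
  proof
    fix z assume "z \<in> X"
    then have "(graph_step W (F - S))\<^sup>*\<^sup>* a z" by (simp add: X_def)
    then show "z \<in> W" by (induction rule: rtranclp_induct) (use ab in auto)
  qed
  moreover have "edge_boundary F X \<subseteq> S"
  proof
    fix h assume "h \<in> edge_boundary F X"
    then obtain p q where h: "h \<in> F" "h = {p, q}" "p \<in> X" "q \<notin> X"
      unfolding edge_boundary_def by blast
    show "h \<in> S"
    proof (rule ccontr)
      assume "h \<notin> S"
      then have "graph_step W (F - S) p q" using h assms(2) \<open>X \<subseteq> W\<close> unfolding adj_def by auto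
      then have "q \<in> X" using h(3) unfolding X_def by (simp add: rtranclp.rtrancl_into_rtrancl)
      then show False using h by blast
    qed
  qed
  moreover have "a \<in> X" "b \<in> W - X" using ab by (simp_all add: X_def)
  ultimately show ?thesis using that by blast
qed

lemma connected_graph_propagate:
  assumes "connected_graph W F" "a \<in> W" "z \<in> W" "P a"
    and "\<And>y z. {y, z} \<in> F \<Longrightarrow> y \<in> W \<Longrightarrow> z \<in> W \<Longrightarrow> P y \<Longrightarrow> P z"
  shows "P z"
proof -
  have "(graph_step W F)\<^sup>*\<^sup>* a z" using assms(1-3) unfolding connected_graph_def by blast
  then show ?thesis
    by (induction rule: rtranclp_induct) (use assms(4,5) in \<open>auto simp: adj_def\<close>)
qed

lemma connected_graph_edge_leaving:
  assumes "connected_graph W F" "a \<in> W" "a \<in> U" "b \<in> W" "b \<notin> U"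
  obtains x y where "{x, y} \<in> F" "x \<in> U" "y \<notin> U"
  using connected_graph_propagate[OF assms(1,2,4), of "\<lambda>z. z \<in> U"] assms(3,5) by blast

lemma finite_edge_cut_cards: "finite F \<Longrightarrow> finite (card ` {S. is_edge_cut W F S})"
  by (rule finite_imageI, rule finite_subset[of _ "Pow F"]) (auto simp: is_edge_cut_def)

lemma edge_connectivity_le: "finite F \<Longrightarrow> is_edge_cut W F S \<Longrightarrow> edge_connectivity W F \<le> card S"
  unfolding edge_connectivity_def by (rule Min_le[OF finite_edge_cut_cards]) auto

lemma edge_connectivity_attained:
  assumes "finite F" "is_edge_cut W F S0"
  obtains S where "is_edge_cut W F S" "card S = edge_connectivity W F"
proof -
  have "edge_connectivity W F \<in> card ` {S. is_edge_cut W F S}"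
    unfolding edge_connectivity_def
    by (rule Min_in[OF finite_edge_cut_cards[OF assms(1)]]) (use assms in auto)
  then show ?thesis using that by auto
qed

lemma K_edges_iff: "{u, v} \<in> K_edges n \<longleftrightarrow> u < n \<and> v < n \<and> u \<noteq> v"
  unfolding K_edges_def by (auto simp: doubleton_eq_iff)

section \<open>Edge boundaries in the direct product with a complete graph\<close>

lemma card_mult_le_sum:
  "(\<And>e. e \<in> F \<Longrightarrow> (k::nat) \<le> g e) \<Longrightarrow> card F * k \<le> sum g F"
  using sum_bounded_below[of F k g] by simp

lemma card_mult_less_sum:
  assumes "finite F" "\<And>e. e \<in> F \<Longrightarrow> (k::nat) \<le> g e" "e0 \<in> F" "k < g e0"
  shows "card F * k < sum g F"
  using sum_strict_mono_ex1[OF assms(1), of "\<lambda>_. k" g] assms(2-4)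
  by (simp add: mult.commute) blast

locale graph_times_complete =
  fixes V :: "'a set" and E :: "'a set set" and n :: nat
  assumes simple: "simple_graph V E" and three_le_n: "3 \<le> n"
begin

abbreviation "VH \<equiv> V \<times> {..<n}"
abbreviation "EH \<equiv> dprod_edges E (K_edges n)"
abbreviation "\<delta> \<equiv> min_degree V E"
abbreviation "\<kappa> \<equiv> edge_connectivity V E"

lemma finite_V: "finite V"
  using simple by (simp add: simple_graph_def)

lemma edge_obtain:
  assumes "e \<in> E"
  obtains x y where "x \<noteq> y" "x \<in> V" "y \<in> V" "e = {x, y}"
  using simple assms by (auto simp: simple_graph_def)

lemma edge_endpoints: "{x, y} \<in> E \<Longrightarrow> x \<noteq> y \<and> x \<in> V \<and> y \<in> V"
  by (erule edge_obtain) (auto simp: doubleton_eq_iff)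

lemma edge_subset_V: "e \<in> E \<Longrightarrow> e \<subseteq> V"
  by (erule edge_obtain) auto

lemma finite_E: "finite E"
proof (rule finite_subset)
  show "E \<subseteq> Pow V" using edge_subset_V by blast
qed (simp add: finite_V)

lemma product_edge_iff:
  "h \<in> EH \<longleftrightarrow> (\<exists>x y u v. h = {(x, u), (y, v)} \<and> {x, y} \<in> E \<and> u < n \<and> v < n \<and> u \<noteq> v)"
  by (simp add: dprod_edges_def K_edges_iff)

lemma product_edge_obtain:
  assumes "h \<in> EH"
  obtains p q where "p \<noteq> q" "p \<in> VH" "q \<in> VH" "h = {p, q}"
  using assms edge_endpoints unfolding product_edge_iff by fastforce

lemma product_edge_subset: "h \<in> EH \<Longrightarrow> h \<subseteq> VH"
  by (erule product_edge_obtain) auto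

lemma finite_EH: "finite EH"
proof (rule finite_subset)
  show "EH \<subseteq> Pow VH" using product_edge_subset by blast
qed (simp add: finite_V)

lemma product_vertices_nonempty: "V \<noteq> {} \<Longrightarrow> VH \<noteq> {}"
  using three_le_n by (simp add: lessThan_empty_iff)

lemma finite_edge_boundary: "finite (edge_boundary EH X)"
  using finite_EH by (simp add: edge_boundary_def)

definition fibre :: "('a \<times> nat) set \<Rightarrow> 'a \<Rightarrow> nat set" where
  "fibre X x = {u. u < n \<and> (x, u) \<in> X}"

definition layer :: "'a set \<Rightarrow> ('a \<times> nat) set set" where
  "layer e = {h. \<exists>p q. h = {p, q} \<and> fst p \<in> e \<and> fst q \<in> e \<and> fst p \<noteq> fst q}"

definition layer_boundary :: "('a \<times> nat) set \<Rightarrow> 'a set \<Rightarrow> nat" where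
  "layer_boundary X e = card (edge_boundary EH X \<inter> layer e)"

lemma fibre_subset: "fibre X x \<subseteq> {..<n}"
  by (auto simp: fibre_def)

lemma fibre_complement: "x \<in> V \<Longrightarrow> fibre (VH - X) x = {..<n} - fibre X x"
  by (auto simp: fibre_def)

lemma layers_disjoint:
  assumes "e \<in> E" "e' \<in> E" "e \<noteq> e'"
  shows "layer e \<inter> layer e' = {}"
proof -
  have key: "e = e'" if "{p, q} \<in> layer e" "{p, q} \<in> layer e'" for p q
  proof -
    have "e = {fst p, fst q}" if "e \<in> E" "{p, q} \<in> layer e" for e
      using that by (elim edge_obtain) (auto simp: layer_def doubleton_eq_iff)
    then have "e = {fst p, fst q}" "e' = {fst p, fst q}" using assms(1,2) that by blast+
    then show ?thesis by simp
  qed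
  show ?thesis
  proof (intro equalityI subsetI)
    fix h assume h: "h \<in> layer e \<inter> layer e'"
    then obtain p q where "h = {p, q}" by (auto simp: layer_def)
    then show "h \<in> {}" using key h assms(3) by blast
  qed simp
qed

lemma sum_layer_boundary_le:
  assumes "F \<subseteq> E"
  shows "(\<Sum>e\<in>F. layer_boundary X e) \<le> card (edge_boundary EH X)"
proof -
  have "finite F" using assms finite_E finite_subset by blast
  moreover have "\<forall>e\<in>F. finite (edge_boundary EH X \<inter> layer e)"
    using finite_edge_boundary by blast
  moreover have "\<forall>e\<in>F. \<forall>e'\<in>F. e \<noteq> e' \<longrightarrow>
      (edge_boundary EH X \<inter> layer e) \<inter> (edge_boundary EH X \<inter> layer e') = {}"
  proof (intro ballI impI)
    fix e e' assume "e \<in> F" "e' \<in> F" "e \<noteq> e'"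
    then have "layer e \<inter> layer e' = {}" using layers_disjoint assms by blast
    then show "(edge_boundary EH X \<inter> layer e) \<inter> (edge_boundary EH X \<inter> layer e') = {}" by blast
  qed
  ultimately have "(\<Sum>e\<in>F. layer_boundary X e) = card (\<Union>e\<in>F. edge_boundary EH X \<inter> layer e)"
    unfolding layer_boundary_def by (rule card_UN_disjoint[symmetric])
  also have "\<dots> \<le> card (edge_boundary EH X)"
    by (rule card_mono[OF finite_edge_boundary]) blast
  finally show ?thesis .
qed

lemma card_cross_pairs_le_layer_boundary:
  assumes e: "{x, y} \<in> E"
  shows "card (cross_pairs n (fibre X x) (fibre X y)) \<le> layer_boundary X {x, y}"
proof -
  have "x \<noteq> y" using edge_endpoints e by blast
  define g where "g = (\<lambda>(u, v). {(x, u :: nat), (y, v :: nat)})"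
  have "inj_on g (cross_pairs n (fibre X x) (fibre X y))"
  proof (rule inj_onI)
    fix a b assume "g a = g b"
    then show "a = b" using \<open>x \<noteq> y\<close> by (cases a, cases b) (simp add: g_def doubleton_eq_iff)
  qed
  moreover have "g ` cross_pairs n (fibre X x) (fibre X y) \<subseteq> edge_boundary EH X \<inter> layer {x, y}"
  proof
    fix h assume "h \<in> g ` cross_pairs n (fibre X x) (fibre X y)"
    then obtain u v where uv: "u < n" "v < n" "u \<noteq> v" "u \<in> fibre X x \<longleftrightarrow> v \<notin> fibre X y"
      and h: "h = {(x, u), (y, v)}"
      unfolding g_def cross_pairs_def by auto
    have "h \<in> EH"
      unfolding product_edge_iff using uv(1-3) h e
      by (intro exI[of _ x] exI[of _ y] exI[of _ u] exI[of _ v]) simp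
    moreover have "\<exists>p q. h = {p, q} \<and> p \<in> X \<and> q \<notin> X"
    proof (cases "(x, u) \<in> X")
      case True
      then have "(y, v) \<notin> X" using uv by (auto simp: fibre_def)
      then show ?thesis using True h by (intro exI[of _ "(x, u)"] exI[of _ "(y, v)"]) simp
    next
      case False
      then have "(y, v) \<in> X" using uv by (auto simp: fibre_def)
      then show ?thesis using False h by (intro exI[of _ "(y, v)"] exI[of _ "(x, u)"]) (simp add: insert_commute)
    qed
    moreover have "h \<in> layer {x, y}"
      unfolding layer_def using h \<open>x \<noteq> y\<close>
      by (intro CollectI exI[of _ "(x, u)"] exI[of _ "(y, v)"]) simp
    ultimately show "h \<in> edge_boundary EH X \<inter> layer {x, y}"
      unfolding edge_boundary_def by (intro IntI CollectI conjI)
  qed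
  then have "card (g ` cross_pairs n (fibre X x) (fibre X y)) \<le> layer_boundary X {x, y}"
    unfolding layer_boundary_def by (rule card_mono[rotated]) (simp add: finite_edge_boundary)
  ultimately show ?thesis by (simp add: card_image)
qed

definition splits :: "('a \<times> nat) set \<Rightarrow> 'a \<Rightarrow> bool" where
  "splits X x \<longleftrightarrow> fibre X x \<noteq> {} \<and> fibre X x \<noteq> {..<n}"

lemma not_splits_iff: "\<not> splits X x \<longleftrightarrow> fibre X x = {} \<or> fibre X x = {..<n}"
  by (auto simp: splits_def)

lemma splits_complement: "x \<in> V \<Longrightarrow> splits (VH - X) x \<longleftrightarrow> splits X x"
  using fibre_subset[of X x] by (auto simp: splits_def fibre_complement)

lemma incident_edge_obtain:
  assumes "e \<in> incident_edges E x"
  obtains y where "y \<noteq> x" "y \<in> V" "e = {x, y}" "{x, y} \<in> E"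
proof -
  have "e \<in> E" "x \<in> e" using assms by (auto simp: incident_edges_def)
  moreover obtain a b where "a \<noteq> b" "a \<in> V" "b \<in> V" "e = {a, b}"
    using \<open>e \<in> E\<close> by (rule edge_obtain)
  ultimately show ?thesis
  proof (cases "x = a")
    case True
    then show ?thesis using that[of b] \<open>e \<in> E\<close> \<open>a \<noteq> b\<close> \<open>b \<in> V\<close> \<open>e = {a, b}\<close> by simp
  next
    case False
    then have "x = b" using \<open>x \<in> e\<close> \<open>e = {a, b}\<close> by simp
    then show ?thesis using that[of a] \<open>e \<in> E\<close> \<open>a \<noteq> b\<close> \<open>a \<in> V\<close> \<open>e = {a, b}\<close>
      by (simp add: insert_commute)
  qed
qed

lemma incident_edges_subset: "incident_edges E x \<subseteq> E"
  by (auto simp: incident_edges_def)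

lemma finite_incident_edges: "finite (incident_edges E x)"
  using finite_E incident_edges_subset finite_subset by blast

lemma min_degree_le: "x \<in> V \<Longrightarrow> \<delta> \<le> degree E x"
  unfolding min_degree_def by (rule Min_le) (auto simp: finite_V)

lemma min_degree_attained:
  assumes "V \<noteq> {}"
  obtains x where "x \<in> V" "degree E x = \<delta>"
proof -
  have "\<delta> \<in> degree E ` V"
    unfolding min_degree_def using assms by (intro Min_in) (auto simp: finite_V)
  then show ?thesis using that by auto
qed

lemma layer_boundary_ge_split:
  assumes "splits X x" "e \<in> incident_edges E x"
  shows "n - 1 \<le> layer_boundary X e"
proof -
  obtain y where y: "e = {x, y}" "{x, y} \<in> E" using assms(2) by (rule incident_edge_obtain)
  have "n - 1 \<le> card (cross_pairs n (fibre X x) (fibre X y))"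
    using assms(1) by (intro card_cross_pairs_partial three_le_n fibre_subset) (auto simp: splits_def)
  also have "\<dots> \<le> layer_boundary X e"
    using card_cross_pairs_le_layer_boundary[OF y(2)] y(1) by simp
  finally show ?thesis .
qed

lemma edge_boundary_ge_split:
  assumes "splits X x"
  shows "degree E x * (n - 1) \<le> card (edge_boundary EH X)"
proof -
  have "degree E x * (n - 1) \<le> (\<Sum>e\<in>incident_edges E x. layer_boundary X e)"
    unfolding degree_def using layer_boundary_ge_split[OF assms] by (rule card_mult_le_sum)
  also have "\<dots> \<le> card (edge_boundary EH X)"
    by (rule sum_layer_boundary_le[OF incident_edges_subset])
  finally show ?thesis .
qed

lemma edge_boundary_gt_incident_layer:
  assumes "splits X x" "e0 \<in> incident_edges E x" "n - 1 < layer_boundary X e0"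
  shows "degree E x * (n - 1) < card (edge_boundary EH X)"
proof -
  have "degree E x * (n - 1) < (\<Sum>e\<in>incident_edges E x. layer_boundary X e)"
    unfolding degree_def using finite_incident_edges layer_boundary_ge_split[OF assms(1)] assms(2,3)
    by (rule card_mult_less_sum)
  also have "\<dots> \<le> card (edge_boundary EH X)"
    by (rule sum_layer_boundary_le[OF incident_edges_subset])
  finally show ?thesis .
qed

lemma edge_boundary_gt_other_layer:
  assumes "splits X x" "e0 \<in> E" "e0 \<notin> incident_edges E x" "0 < layer_boundary X e0"
  shows "degree E x * (n - 1) < card (edge_boundary EH X)"
proof -
  have "degree E x * (n - 1) \<le> (\<Sum>e\<in>incident_edges E x. layer_boundary X e)"
    unfolding degree_def using layer_boundary_ge_split[OF assms(1)] by (rule card_mult_le_sum)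
  also have "\<dots> < (\<Sum>e\<in>insert e0 (incident_edges E x). layer_boundary X e)"
    using assms(3,4) finite_incident_edges by simp
  also have "\<dots> \<le> card (edge_boundary EH X)"
    by (rule sum_layer_boundary_le) (use assms(2) incident_edges_subset in auto)
  finally show ?thesis .
qed

text \<open>If no fibre is split, X is the cylinder over the set U of vertices with full fibre,
  and each edge of the cut of G at U carries n (n - 1) boundary edges.\<close>

lemma edge_boundary_ge_unsplit:
  assumes "X \<subseteq> VH" "p \<in> X" "q \<in> VH" "q \<notin> X" and unsplit: "\<forall>z\<in>V. \<not> splits X z"
  shows "n * (n - 1) * \<kappa> \<le> card (edge_boundary EH X)"
proof -
  define U where "U = {z \<in> V. fibre X z = {..<n}}"
  have "snd p \<in> fibre X (fst p)" "fst p \<in> V" "snd q \<in> {..<n} - fibre X (fst q)" "fst q \<in> V"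
    using assms(1-4) by (auto simp: fibre_def)
  then have "fst p \<in> U" "fst q \<in> V" "fst q \<notin> U"
    using unsplit unfolding U_def not_splits_iff by auto
  then have "is_edge_cut V E (edge_boundary E U)"
    by (intro is_edge_cut_edge_boundary[of U V "fst p" "fst q"]) (auto simp: U_def)
  then have "\<kappa> \<le> card (edge_boundary E U)" by (rule edge_connectivity_le[OF finite_E])
  have "n * (n - 1) * \<kappa> = \<kappa> * (n * n - n)" by (simp add: diff_mult_distrib2 mult.commute)
  also have "\<dots> \<le> card (edge_boundary E U) * (n * n - n)"
    using \<open>\<kappa> \<le> card (edge_boundary E U)\<close> by (rule mult_le_mono1)
  also have "\<dots> \<le> (\<Sum>e\<in>edge_boundary E U. layer_boundary X e)"
  proof (rule card_mult_le_sum)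
    fix e assume "e \<in> edge_boundary E U"
    then obtain a b where ab: "e = {a, b}" "{a, b} \<in> E" "a \<in> U" "b \<notin> U"
      unfolding edge_boundary_def by blast
    then have "fibre X a = {..<n}" "fibre X b = {}"
      using edge_endpoints[OF ab(2)] unsplit by (auto simp: U_def not_splits_iff)
    then show "n * n - n \<le> layer_boundary X e"
      using card_cross_pairs_le_layer_boundary[OF ab(2), of X] ab(1) card_cross_pairs_empty_full[of n]
      by simp
  qed
  also have "\<dots> \<le> card (edge_boundary EH X)"
    by (rule sum_layer_boundary_le) (auto simp: edge_boundary_def)
  finally show ?thesis .
qed

lemma edge_cut_lower_bound:
  assumes "V \<noteq> {}" "is_edge_cut VH EH S"
  shows "n * (n - 1) * \<kappa> \<le> card S \<or> (n - 1) * \<delta> \<le> card S"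
proof -
  have "\<forall>h\<in>EH. h \<subseteq> VH" using product_edge_subset by blast
  with product_vertices_nonempty[OF assms(1)] obtain X
    where X: "X \<subseteq> VH" "X \<noteq> {}" "VH - X \<noteq> {}" "edge_boundary EH X \<subseteq> S"
    using assms(2) by (rule edge_cut_contains_edge_boundary)
  have "finite S" using assms(2) finite_EH finite_subset unfolding is_edge_cut_def by blast
  then have bS: "card (edge_boundary EH X) \<le> card S" using X(4) by (rule card_mono)
  show ?thesis
  proof (cases "\<exists>x\<in>V. splits X x")
    case True
    then obtain x where x: "x \<in> V" "splits X x" by blast
    have "\<delta> * (n - 1) \<le> degree E x * (n - 1)"
      using min_degree_le[OF x(1)] by (rule mult_le_mono1)
    also have "\<dots> \<le> card (edge_boundary EH X)" using x(2) by (rule edge_boundary_ge_split)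
    finally show ?thesis using bS by (simp add: mult.commute)
  next
    case False
    obtain p q where "p \<in> X" "q \<in> VH" "q \<notin> X" using X(2,3) by blast
    then have "n * (n - 1) * \<kappa> \<le> card (edge_boundary EH X)"
      using False by (intro edge_boundary_ge_unsplit[OF X(1)]) auto
    then show ?thesis using bS by simp
  qed
qed

lemma edge_boundary_singleton: "edge_boundary EH {p} = incident_edges EH p"
proof
  show "edge_boundary EH {p} \<subseteq> incident_edges EH p"
    by (auto simp: edge_boundary_def incident_edges_def)
  show "incident_edges EH p \<subseteq> edge_boundary EH {p}"
  proof
    fix h assume "h \<in> incident_edges EH p"
    then have h: "h \<in> EH" "p \<in> h" by (auto simp: incident_edges_def)
    obtain a b where "a \<noteq> b" "h = {a, b}" using h(1) by (rule product_edge_obtain)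
    then obtain q where "q \<noteq> p" "h = {p, q}"
    proof (cases "p = a")
      case True
      then show ?thesis using that[of b] \<open>a \<noteq> b\<close> \<open>h = {a, b}\<close> by simp
    next
      case False
      then have "p = b" using \<open>h = {a, b}\<close> h(2) by simp
      then show ?thesis using that[of a] \<open>a \<noteq> b\<close> \<open>h = {a, b}\<close> by (simp add: insert_commute)
    qed
    then show "h \<in> edge_boundary EH {p}"
      unfolding edge_boundary_def using h(1) by blast
  qed
qed

lemma edge_boundary_complement:
  assumes "X \<subseteq> VH"
  shows "edge_boundary EH (VH - X) = edge_boundary EH X"
proof -
  have "edge_boundary EH (VH - Y) \<subseteq> edge_boundary EH Y" if "Y \<subseteq> VH" for Y
  proof
    fix h assume "h \<in> edge_boundary EH (VH - Y)"
    then obtain p q where h: "h \<in> EH" "h = {p, q}" "p \<in> VH - Y" "q \<notin> VH - Y"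
      unfolding edge_boundary_def by blast
    then have "q \<in> Y" using product_edge_subset by blast
    then show "h \<in> edge_boundary EH Y"
      unfolding edge_boundary_def using h
      by (intro CollectI conjI exI[of _ q] exI[of _ p]) (auto simp: insert_commute)
  qed
  from this[OF assms] this[of "VH - X"] show ?thesis using assms by (simp add: double_diff)
qed

lemma card_incident_product_le:
  assumes "u < n"
  shows "card (incident_edges EH (x, u)) \<le> (n - 1) * degree E x"
proof -
  define N where "N = {y. {x, y} \<in> E}"
  have "N \<subseteq> V" using edge_endpoints by (auto simp: N_def)
  then have "finite N" using finite_V by (rule finite_subset)
  have "incident_edges EH (x, u) \<subseteq> (\<Union>y\<in>N. (\<lambda>v. {(x, u), (y, v)}) ` ({..<n} - {u}))"
  proof
    fix h assume "h \<in> incident_edges EH (x, u)"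
    then have "h \<in> EH" "(x, u) \<in> h" by (auto simp: incident_edges_def)
    then obtain x' y' u' v' where h: "h = {(x', u'), (y', v')}" "{x', y'} \<in> E" "u' < n" "v' < n" "u' \<noteq> v'"
        and "(x, u) = (x', u') \<or> (x, u) = (y', v')"
      unfolding product_edge_iff by blast
    then show "h \<in> (\<Union>y\<in>N. (\<lambda>v. {(x, u), (y, v)}) ` ({..<n} - {u}))"
      unfolding N_def by (auto simp: insert_commute)
  qed
  then have "card (incident_edges EH (x, u)) \<le> card (\<Union>y\<in>N. (\<lambda>v. {(x, u), (y, v)}) ` ({..<n} - {u}))"
    by (rule card_mono[rotated]) (simp add: \<open>finite N\<close>)
  also have "\<dots> \<le> (\<Sum>y\<in>N. card ((\<lambda>v. {(x, u), (y, v)}) ` ({..<n} - {u})))"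
    by (rule card_UN_le[OF \<open>finite N\<close>])
  also have "\<dots> \<le> (\<Sum>y\<in>N. n - 1)"
    by (rule sum_mono) (use card_image_le[of "{..<n} - {u}"] assms in auto)
  also have "\<dots> = (n - 1) * card N" by simp
  also have "card N = degree E x"
  proof -
    have "inj_on (\<lambda>y. {x, y}) N" by (auto simp: inj_on_def doubleton_eq_iff)
    moreover have "(\<lambda>y. {x, y}) ` N = incident_edges E x"
    proof
      show "(\<lambda>y. {x, y}) ` N \<subseteq> incident_edges E x" by (auto simp: N_def incident_edges_def)
      show "incident_edges E x \<subseteq> (\<lambda>y. {x, y}) ` N"
        by (auto simp: N_def elim!: incident_edge_obtain)
    qed
    ultimately show ?thesis unfolding degree_def by (metis card_image)
  qed
  finally show ?thesis .
qed

lemma card_layer_le: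
  assumes "e \<in> E"
  shows "card (EH \<inter> layer e) \<le> n * n - n"
proof -
  obtain a b where ab: "a \<noteq> b" "e = {a, b}" using assms by (rule edge_obtain)
  define g where "g = (\<lambda>(u, v). {(a, u :: nat), (b, v :: nat)})"
  have "EH \<inter> layer e \<subseteq> g ` cross_pairs n {..<n} {}"
  proof
    fix h assume h: "h \<in> EH \<inter> layer e"
    then have "h \<in> EH" by blast
    then obtain x y u v where h1: "h = {(x, u), (y, v)}" "{x, y} \<in> E" "u < n" "v < n" "u \<noteq> v"
      unfolding product_edge_iff by blast
    obtain p q where h2: "h = {p, q}" "fst p \<in> e" "fst q \<in> e" "fst p \<noteq> fst q"
      using h unfolding layer_def by blast
    have "{x, y} = {a, b}"
      using h1(1) h2 ab by (auto simp: doubleton_eq_iff)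
    then have "h = g (u, v) \<or> h = g (v, u)"
      using h1(1) ab(1) by (auto simp: g_def doubleton_eq_iff insert_commute)
    moreover have "(u, v) \<in> cross_pairs n {..<n} {}" "(v, u) \<in> cross_pairs n {..<n} {}"
      using h1 by (auto simp: cross_pairs_def)
    ultimately show "h \<in> g ` cross_pairs n {..<n} {}" by blast
  qed
  then have "card (EH \<inter> layer e) \<le> card (g ` cross_pairs n {..<n} {})"
    by (intro card_mono finite_imageI finite_cross_pairs)
  also have "\<dots> \<le> n * n - n"
    using card_image_le[OF finite_cross_pairs] card_cross_pairs_empty_full by metis
  finally show ?thesis .
qed

lemma card_edge_boundary_cylinder_le:
  assumes "U \<subseteq> V"
  shows "card (edge_boundary EH (U \<times> {..<n})) \<le> card (edge_boundary E U) * (n * n - n)"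
proof -
  have "edge_boundary EH (U \<times> {..<n}) \<subseteq> (\<Union>e\<in>edge_boundary E U. EH \<inter> layer e)"
  proof
    fix h assume "h \<in> edge_boundary EH (U \<times> {..<n})"
    then obtain p q where h: "h \<in> EH" "h = {p, q}" "p \<in> U \<times> {..<n}" "q \<notin> U \<times> {..<n}"
      unfolding edge_boundary_def by blast
    moreover have "q \<in> VH" using h(1,2) product_edge_subset by blast
    ultimately have "fst p \<in> U" "fst q \<notin> U" by (auto simp: mem_Times_iff)
    obtain x y u v where h1: "h = {(x, u), (y, v)}" "{x, y} \<in> E"
      using h(1) unfolding product_edge_iff by blast
    have "{fst p, fst q} = {x, y}"
      using h(2) h1(1) by (auto simp: doubleton_eq_iff)
    then have "{fst p, fst q} \<in> edge_boundary E U"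
      unfolding edge_boundary_def using h1(2) \<open>fst p \<in> U\<close> \<open>fst q \<notin> U\<close> by auto
    moreover have "h \<in> layer {fst p, fst q}"
      unfolding layer_def using h(2) \<open>fst p \<in> U\<close> \<open>fst q \<notin> U\<close>
      by (intro CollectI exI[of _ p] exI[of _ q]) auto
    ultimately show "h \<in> (\<Union>e\<in>edge_boundary E U. EH \<inter> layer e)" using h(1) by blast
  qed
  then have "card (edge_boundary EH (U \<times> {..<n})) \<le> card (\<Union>e\<in>edge_boundary E U. EH \<inter> layer e)"
    by (rule card_mono[rotated]) (simp add: finite_EH)
  also have "\<dots> \<le> (\<Sum>e\<in>edge_boundary E U. card (EH \<inter> layer e))"
    by (rule card_UN_le) (simp add: finite_E edge_boundary_def)
  also have "\<dots> \<le> card (edge_boundary E U) * (n * n - n)"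
    using card_layer_le sum_bounded_above[of "edge_boundary E U" "\<lambda>e. card (EH \<inter> layer e)" "n * n - n"]
    by (auto simp: edge_boundary_def)
  finally show ?thesis .
qed

end

section \<open>Connected factors\<close>

locale connected_graph_times_complete = graph_times_complete +
  assumes connected: "connected_graph V E" and two_le_card_V: "2 \<le> card V"
begin

lemma V_nonempty: "V \<noteq> {}"
  using two_le_card_V by auto

lemma V_not_subset_singleton: "\<not> V \<subseteq> {x}"
proof
  assume "V \<subseteq> {x}"
  then have "card V \<le> 1" using card_mono[of "{x}" V] by simp
  then show False using two_le_card_V by simp
qed

lemma degree_pos:
  assumes "x \<in> V"
  shows "1 \<le> degree E x"
proof (rule ccontr)
  assume "\<not> 1 \<le> degree E x"
  then have no_edge: "incident_edges E x = {}"
    using finite_incident_edges[of x] by (simp add: degree_def not_less_eq_eq)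
  have "z = x" if "z \<in> V" for z
  proof (rule connected_graph_propagate[OF connected assms that, of "\<lambda>z. z = x"])
    fix y z assume "{y, z} \<in> E" "y = x"
    then show "z = x" using no_edge by (auto simp: incident_edges_def)
  qed simp
  then show False using V_not_subset_singleton by blast
qed

lemma min_degree_pos: "1 \<le> \<delta>"
  using min_degree_attained[OF V_nonempty] degree_pos by metis

lemma is_edge_cut_all_edges: "is_edge_cut V E E"
proof -
  obtain x where "x \<in> V" using V_nonempty by blast
  moreover obtain z where "z \<in> V" "x \<noteq> z" using V_not_subset_singleton[of x] by blast
  moreover have "\<not> (graph_step V (E - E))\<^sup>*\<^sup>* x z"
    using \<open>x \<noteq> z\<close> by (auto elim: converse_rtranclpE simp: adj_def)
  ultimately show ?thesis unfolding is_edge_cut_def connected_graph_def by blast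
qed

lemma graph_iso_K2:
  assumes xy: "{x, y} \<in> E" and "degree E x = 1" "degree E y = 1"
  shows "graph_iso V E (K_verts 2) (K_edges 2)"
proof -
  have x: "x \<noteq> y" "x \<in> V" "y \<in> V" using edge_endpoints xy by auto
  have inc: "incident_edges E w = {{x, y}}" if "w \<in> {x, y}" for w
  proof -
    have "degree E w = 1" using that assms by auto
    then obtain e where "incident_edges E w = {e}" unfolding degree_def by (rule card_1_singletonE)
    moreover have "{x, y} \<in> incident_edges E w" using xy that by (auto simp: incident_edges_def)
    ultimately show ?thesis by simp
  qed
  have "z \<in> {x, y}" if "z \<in> V" for z
  proof (rule connected_graph_propagate[OF connected x(2) that, of "\<lambda>z. z \<in> {x, y}"])
    fix w z assume "{w, z} \<in> E" "w \<in> {x, y}"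
    then have "{w, z} \<in> incident_edges E w" by (simp add: incident_edges_def)
    then have "{w, z} = {x, y}" using inc[OF \<open>w \<in> {x, y}\<close>] by simp
    then show "z \<in> {x, y}" by auto
  qed simp
  then have V: "V = {x, y}" using x by auto
  define g where "g = (\<lambda>z. if z = x then 0 else (1::nat))"
  have "bij_betw g V (K_verts 2)"
    unfolding bij_betw_def inj_on_def V K_verts_def g_def using x(1) by auto
  moreover have "{a, b} \<in> E \<longleftrightarrow> {g a, g b} \<in> K_edges 2" if "a \<in> V" "b \<in> V" for a b
    using that x xy edge_endpoints[of a a] unfolding V K_edges_iff g_def by (auto simp: insert_commute)
  ultimately show ?thesis unfolding graph_iso_def by blast
qed

lemma card_incident_edges_union_ge:
  assumes "x \<in> V" "y \<in> V" "x \<noteq> y" and not_K2: "\<not> ({x, y} \<in> E \<and> degree E x = 1 \<and> degree E y = 1)"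
  shows "\<delta> + 1 \<le> card (incident_edges E x \<union> incident_edges E y)"
proof -
  have "incident_edges E x \<inter> incident_edges E y \<subseteq> {{x, y}} \<inter> E"
    using assms(3) by (auto simp: incident_edges_def elim!: edge_obtain)
  then have "card (incident_edges E x \<inter> incident_edges E y) \<le> card ({{x, y}} \<inter> E)"
    by (rule card_mono[rotated]) simp
  moreover have "card (incident_edges E x \<union> incident_edges E y) + card (incident_edges E x \<inter> incident_edges E y)
      = degree E x + degree E y"
    unfolding degree_def by (rule card_Un_Int[OF finite_incident_edges finite_incident_edges, symmetric])
  moreover have "\<delta> \<le> degree E x" "\<delta> \<le> degree E y"
    using min_degree_le assms(1,2) by auto
  ultimately show ?thesis using min_degree_pos not_K2
    by (cases "{x, y} \<in> E") (auto simp: Int_insert_left)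
qed

lemma edge_boundary_gt_two_split:
  assumes not_K2_3: "\<not> (graph_iso V E (K_verts 2) (K_edges 2) \<and> n = 3)"
    and "x \<in> V" "y \<in> V" "x \<noteq> y" "splits X x" "splits X y"
  shows "(n - 1) * \<delta> < card (edge_boundary EH X)"
proof (cases "{x, y} \<in> E \<and> degree E x = 1 \<and> degree E y = 1")
  case True
  \<comment> \<open>then G is K2, so n \<ge> 4 and the single layer already carries n boundary edges\<close>
  then have "4 \<le> n" "\<delta> = 1"
    using graph_iso_K2 not_K2_3 three_le_n min_degree_le[OF assms(2)] min_degree_pos by auto
  then have "n \<le> card (cross_pairs n (fibre X x) (fibre X y))"
    using assms(5,6) by (intro card_cross_pairs_two_partial fibre_subset) (auto simp: splits_def)
  also have "\<dots> \<le> (\<Sum>e\<in>{{x, y}}. layer_boundary X e)"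
    using card_cross_pairs_le_layer_boundary True by simp
  also have "\<dots> \<le> card (edge_boundary EH X)"
    by (rule sum_layer_boundary_le) (use True in simp)
  finally show ?thesis using \<open>\<delta> = 1\<close> three_le_n by simp
next
  case False
  let ?F = "incident_edges E x \<union> incident_edges E y"
  have "(n - 1) * \<delta> < (\<delta> + 1) * (n - 1)" using three_le_n by (simp add: mult.commute)
  also have "\<dots> \<le> card ?F * (n - 1)"
    using card_incident_edges_union_ge[OF assms(2-4) False] by (rule mult_le_mono1)
  also have "\<dots> \<le> (\<Sum>e\<in>?F. layer_boundary X e)"
    by (rule card_mult_le_sum) (use layer_boundary_ge_split assms(5,6) in blast)
  also have "\<dots> \<le> card (edge_boundary EH X)"
    by (rule sum_layer_boundary_le) (simp add: incident_edges_subset)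
  finally show ?thesis .
qed

text \<open>In the following
  lemmas the boundary of X is tight, i.e. has no further edges, and each extra boundary edge
  that would otherwise exist gives a contradiction.\<close>

lemma tight_split_fibre_singleton:
  assumes split: "splits X x" and tight: "card (edge_boundary EH X) \<le> degree E x * (n - 1)"
    and y0: "{x, y0} \<in> E" "fibre X y0 = {}"
  obtains u where "fibre X x = {u}"
proof -
  have unique: "u = u'" if "u \<in> fibre X x" "u' \<in> fibre X x" for u u'
  proof (rule ccontr)
    assume "u \<noteq> u'"
    obtain t where "t < n" "t \<notin> fibre X x"
      using split fibre_subset by (auto simp: splits_def)
    have "n \<le> card (cross_pairs n (fibre X x) {})"
      by (rule card_cross_pairs_empty[OF fibre_subset that \<open>u \<noteq> u'\<close> \<open>t < n\<close> \<open>t \<notin> fibre X x\<close>])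
    also have "\<dots> \<le> layer_boundary X {x, y0}"
      using card_cross_pairs_le_layer_boundary[OF y0(1), of X] y0(2) by simp
    finally have "n - 1 < layer_boundary X {x, y0}" using three_le_n by linarith
    then show False
      using edge_boundary_gt_incident_layer[OF split] tight y0(1) by (auto simp: incident_edges_def)
  qed
  obtain u where "u \<in> fibre X x" using split by (auto simp: splits_def)
  then have "fibre X x = {u}" using unique by blast
  then show ?thesis by (rule that)
qed

lemma tight_split_neighbour_not_full:
  assumes split: "splits X x" and tight: "card (edge_boundary EH X) \<le> degree E x * (n - 1)"
    and u: "fibre X x = {u}" and y: "{x, y} \<in> E"
  shows "fibre X y \<noteq> {..<n}"
proof
  assume full: "fibre X y = {..<n}"
  have "u < n" using u fibre_subset by blast
  have "\<exists>a b. a < n \<and> b < n \<and> a \<noteq> b \<and> a \<noteq> u \<and> b \<noteq> u" using three_le_n by presburger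
  then obtain a b where ab: "a \<in> {..<n} - {u}" "b \<in> {..<n} - {u}" "a \<noteq> b" by auto
  have "n \<le> card (cross_pairs n ({..<n} - {u}) {})"
    by (rule card_cross_pairs_empty[OF _ ab]) (use \<open>u < n\<close> in auto)
  also have "cross_pairs n ({..<n} - {u}) {} = cross_pairs n (fibre X x) (fibre X y)"
    using cross_pairs_complement[of n "{..<n} - {u}" "{}"] u full \<open>u < n\<close> by (simp add: double_diff)
  also have "card \<dots> \<le> layer_boundary X {x, y}"
    by (rule card_cross_pairs_le_layer_boundary[OF y])
  finally have "n - 1 < layer_boundary X {x, y}" using three_le_n by linarith
  then show False
    using edge_boundary_gt_incident_layer[OF split] tight y by (auto simp: incident_edges_def)
qed

lemma tight_split_other_fibres_empty:
  assumes "x \<in> V" and split: "splits X x" and unsplit: "\<forall>z\<in>V. z \<noteq> x \<longrightarrow> \<not> splits X z"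
    and tight: "card (edge_boundary EH X) \<le> degree E x * (n - 1)"
    and u: "fibre X x = {u}" and "z \<in> V" "z \<noteq> x"
  shows "fibre X z = {}"
proof -
  have "z = x \<or> fibre X z = {}"
  proof (rule connected_graph_propagate[OF connected assms(1) \<open>z \<in> V\<close>])
    fix w z assume wz: "{w, z} \<in> E" "z \<in> V" "w = x \<or> fibre X w = {}"
    show "z = x \<or> fibre X z = {}"
    proof (cases "z = x \<or> w = x")
      case True
      then show ?thesis
        using tight_split_neighbour_not_full[OF split tight u] unsplit wz by (auto simp: not_splits_iff)
    next
      case False
      have "fibre X z \<noteq> {..<n}"
      proof
        assume "fibre X z = {..<n}"
        then have "cross_pairs n (fibre X w) (fibre X z) = cross_pairs n {..<n} {}"
          using cross_pairs_complement[of n "{..<n}" "{}"] False wz(3) by simp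
        then have "n * n - n \<le> layer_boundary X {w, z}"
          using card_cross_pairs_le_layer_boundary[OF wz(1), of X] card_cross_pairs_empty_full[of n]
          by simp
        moreover have "3 * n \<le> n * n" using three_le_n by simp
        ultimately have "0 < layer_boundary X {w, z}" using three_le_n by linarith
        moreover have "{w, z} \<notin> incident_edges E x" using False by (auto simp: incident_edges_def)
        ultimately show False
          using edge_boundary_gt_other_layer[OF split wz(1)] tight by linarith
      qed
      then show ?thesis using unsplit wz(2) False by (auto simp: not_splits_iff)
    qed
  qed simp
  then show ?thesis using \<open>z \<noteq> x\<close> by blast
qed

lemma tight_split_singleton:
  assumes "X \<subseteq> VH" "x \<in> V" "splits X x" "\<forall>z\<in>V. z \<noteq> x \<longrightarrow> \<not> splits X z"
    and tight: "card (edge_boundary EH X) \<le> degree E x * (n - 1)"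
    and "{x, y0} \<in> E" "fibre X y0 = {}"
  shows "\<exists>u. X = {(x, u)}"
proof -
  obtain u where u: "fibre X x = {u}"
    using tight_split_fibre_singleton[OF assms(3) tight assms(6,7)] .
  have "X \<subseteq> {(x, u)}"
  proof
    fix p assume "p \<in> X"
    then have "snd p \<in> fibre X (fst p)" "fst p \<in> V" using assms(1) by (auto simp: fibre_def)
    then have "fst p = x"
      using tight_split_other_fibres_empty[OF assms(2-4) tight u] by blast
    then show "p \<in> {(x, u)}" using \<open>snd p \<in> fibre X (fst p)\<close> u by (cases p) simp
  qed
  moreover have "(x, u) \<in> X" using u by (auto simp: fibre_def)
  ultimately show ?thesis by blast
qed

text \<open>Passing to the complement of X, which has the same boundary, we may assume that
  some neighbour of x has empty fibre.\<close>

lemma tight_split_star: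
  assumes "X \<subseteq> VH" "x \<in> V" "splits X x" "\<forall>z\<in>V. z \<noteq> x \<longrightarrow> \<not> splits X z"
    and tight: "card (edge_boundary EH X) \<le> degree E x * (n - 1)"
  shows "\<exists>p\<in>VH. edge_boundary EH X = incident_edges EH p"
proof -
  have star: "\<exists>p\<in>VH. edge_boundary EH Y = incident_edges EH p"
    if Y: "Y \<subseteq> VH" "splits Y x" "\<forall>z\<in>V. z \<noteq> x \<longrightarrow> \<not> splits Y z"
      "card (edge_boundary EH Y) \<le> degree E x * (n - 1)" "{x, y} \<in> E" "fibre Y y = {}" for Y y
  proof -
    obtain u where "Y = {(x, u)}" using tight_split_singleton[OF Y(1) assms(2) Y(2-6)] by blast
    then show ?thesis using Y(1) edge_boundary_singleton by blast
  qed
  have "incident_edges E x \<noteq> {}" using degree_pos[OF assms(2)] by (auto simp: degree_def)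
  then obtain e where "e \<in> incident_edges E x" by blast
  then obtain y where y: "y \<noteq> x" "y \<in> V" "{x, y} \<in> E" by (rule incident_edge_obtain)
  then consider "fibre X y = {}" | "fibre X y = {..<n}"
    using assms(4) by (auto simp: not_splits_iff)
  then show ?thesis
  proof cases
    case 1
    then show ?thesis using star[OF assms(1,3,4) tight y(3)] by blast
  next
    case 2
    have "fibre (VH - X) y = {}" using 2 fibre_complement[OF y(2)] by simp
    moreover have "\<forall>z\<in>V. z \<noteq> x \<longrightarrow> \<not> splits (VH - X) z" using assms(4) splits_complement by blast
    ultimately show ?thesis
      using star[of "VH - X"] assms(2,3) tight y(3) splits_complement edge_boundary_complement[OF assms(1)]
      by auto
  qed
qed

lemma edge_connectivity_product_le: "edge_connectivity VH EH \<le> (n - 1) * \<delta>"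
proof -
  obtain x where x: "x \<in> V" "degree E x = \<delta>" using min_degree_attained[OF V_nonempty] .
  have "(x, 0) \<in> VH" "(x, 1) \<in> VH" using x three_le_n by auto
  then have "is_edge_cut VH EH (edge_boundary EH {(x, 0)})"
    by (intro is_edge_cut_edge_boundary) auto
  then have "edge_connectivity VH EH \<le> card (incident_edges EH (x, 0))"
    using edge_connectivity_le[OF finite_EH] edge_boundary_singleton by simp
  also have "\<dots> \<le> (n - 1) * \<delta>"
    using card_incident_product_le[of 0 x] three_le_n x(2) by simp
  finally show ?thesis .
qed

theorem min_edge_cut_is_star:
  assumes less: "\<delta> < n * \<kappa>" and not_K2_3: "\<not> (graph_iso V E (K_verts 2) (K_edges 2) \<and> n = 3)"
    and S: "is_min_edge_cut VH EH S"
  shows "\<exists>p\<in>VH. S = incident_edges EH p"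
proof -
  have cut: "is_edge_cut VH EH S" and card_S: "card S \<le> (n - 1) * \<delta>"
    using S edge_connectivity_product_le by (auto simp: is_min_edge_cut_def)
  have "\<forall>h\<in>EH. h \<subseteq> VH" using product_edge_subset by blast
  with product_vertices_nonempty[OF V_nonempty] obtain X
    where X: "X \<subseteq> VH" "X \<noteq> {}" "VH - X \<noteq> {}" "edge_boundary EH X \<subseteq> S"
    using cut by (rule edge_cut_contains_edge_boundary)
  have "finite S" using cut finite_EH finite_subset unfolding is_edge_cut_def by blast
  then have boundary_le: "card (edge_boundary EH X) \<le> card S" using X(4) by (rule card_mono)
  consider (unsplit) "\<forall>z\<in>V. \<not> splits X z" | (two) x y where "x \<in> V" "y \<in> V" "x \<noteq> y" "splits X x" "splits X y"
    | (unique) x where "x \<in> V" "splits X x" "\<forall>z\<in>V. z \<noteq> x \<longrightarrow> \<not> splits X z"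
    by blast
  then show ?thesis
  proof cases
    case unsplit
    have "(n - 1) * \<delta> < (n - 1) * (n * \<kappa>)" using less three_le_n by simp
    also have "\<dots> \<le> card (edge_boundary EH X)"
      using edge_boundary_ge_unsplit[OF X(1) _ _ _ unsplit] X(2,3) by (auto simp: mult_ac)
    finally show ?thesis using boundary_le card_S by linarith
  next
    case two
    then have "(n - 1) * \<delta> < card (edge_boundary EH X)" by (rule edge_boundary_gt_two_split[OF not_K2_3])
    then show ?thesis using boundary_le card_S by linarith
  next
    case unique
    have "card S \<le> (n - 1) * \<delta>" by (rule card_S)
    also have "\<dots> \<le> (n - 1) * degree E x" using min_degree_le[OF unique(1)] by (rule mult_le_mono2)
    also have "\<dots> = degree E x * (n - 1)" by (rule mult.commute)
    finally have S_le: "card S \<le> degree E x * (n - 1)" .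
    also have "\<dots> \<le> card (edge_boundary EH X)" using unique(2) by (rule edge_boundary_ge_split)
    finally have "card (edge_boundary EH X) = card S" using boundary_le by linarith
    then have "edge_boundary EH X = S" by (rule card_subset_eq[OF \<open>finite S\<close> X(4)])
    moreover have "card (edge_boundary EH X) \<le> degree E x * (n - 1)"
      using S_le \<open>edge_boundary EH X = S\<close> by simp
    ultimately show ?thesis using tight_split_star[OF X(1) unique] by simp
  qed
qed

lemma edge_boundary_cylinder_not_star:
  assumes "U \<subseteq> V" "a \<in> U" "b \<in> V" "b \<notin> U"
  shows "edge_boundary EH (U \<times> {..<n}) \<noteq> incident_edges EH p"
proof
  assume star: "edge_boundary EH (U \<times> {..<n}) = incident_edges EH p"
  obtain x y where xy: "{x, y} \<in> E" "x \<in> U" "y \<notin> U"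
    using connected_graph_edge_leaving[OF connected _ assms(2-4)] assms(1,2) by blast
  \<comment> \<open>two disjoint boundary edges cannot share the centre p\<close>
  have "{(x, u), (y, v)} \<in> edge_boundary EH (U \<times> {..<n})" if "u < n" "v < n" "u \<noteq> v" for u v
    unfolding edge_boundary_def product_edge_iff using xy that
    by (intro CollectI conjI exI[of _ "(x, u)"] exI[of _ "(y, v)"]) blast+
  then have "p \<in> {(x, 0), (y, 1)}" "p \<in> {(x, 1), (y, 0)}"
    using star three_le_n by (auto simp: incident_edges_def)
  then show False using xy by auto
qed

theorem product_not_super_edge_connected:
  assumes "n * \<kappa> \<le> \<delta>"
  shows "\<not> super_edge_connected VH EH"
proof
  assume super: "super_edge_connected VH EH"
  obtain S where S: "is_edge_cut V E S" "card S = \<kappa>"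
    using edge_connectivity_attained[OF finite_E is_edge_cut_all_edges] .
  have "\<forall>e\<in>E. e \<subseteq> V" using edge_subset_V by blast
  with V_nonempty obtain U where U: "U \<subseteq> V" "U \<noteq> {}" "V - U \<noteq> {}" "edge_boundary E U \<subseteq> S"
    using S(1) by (rule edge_cut_contains_edge_boundary)
  obtain a b where ab: "a \<in> U" "b \<in> V" "b \<notin> U" using U(2,3) by blast
  have "card (edge_boundary E U) \<le> \<kappa>"
    using S finite_E U(4) by (metis card_mono finite_subset is_edge_cut_def)
  have "card (edge_boundary EH (U \<times> {..<n})) \<le> card (edge_boundary E U) * (n * n - n)"
    by (rule card_edge_boundary_cylinder_le[OF U(1)])
  also have "\<dots> \<le> \<kappa> * (n * n - n)"
    using \<open>card (edge_boundary E U) \<le> \<kappa>\<close> by (rule mult_le_mono1)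
  also have "\<dots> = n * (n - 1) * \<kappa>" by (simp add: diff_mult_distrib2 mult.commute)
  finally have "card (edge_boundary EH (U \<times> {..<n})) \<le> n * (n - 1) * \<kappa>" .
  moreover have cut: "is_edge_cut VH EH (edge_boundary EH (U \<times> {..<n}))"
    using U(1) ab three_le_n by (intro is_edge_cut_edge_boundary[of _ _ "(a, 0)" "(b, 0)"]) auto
  moreover have "n * (n - 1) * \<kappa> \<le> edge_connectivity VH EH"
  proof -
    obtain S' where S': "is_edge_cut VH EH S'" "card S' = edge_connectivity VH EH"
      using edge_connectivity_attained[OF finite_EH cut] .
    have "n * (n - 1) * \<kappa> \<le> (n - 1) * \<delta>" using assms by (simp add: mult_ac)
    then show ?thesis using edge_cut_lower_bound[OF V_nonempty S'(1)] S'(2) by linarith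
  qed
  ultimately have "is_min_edge_cut VH EH (edge_boundary EH (U \<times> {..<n}))"
    using edge_connectivity_le[OF finite_EH cut] by (simp add: is_min_edge_cut_def)
  then obtain p where "edge_boundary EH (U \<times> {..<n}) = incident_edges EH p"
    using super unfolding super_edge_connected_def by blast
  then show False using edge_boundary_cylinder_not_star[OF U(1) ab] by blast
qed

end

theorem corollary2:
  fixes V :: "'a set" and E :: "'a set set" and n :: nat
  assumes "simple_graph V E"
    and "connected_graph V E"
    and "card V \<ge> 2"
    and "n \<ge> 3"
    and "\<not> (graph_iso V E (K_verts 2) (K_edges 2) \<and> n = 3)"
  shows "super_edge_connected (dprod_verts V (K_verts n)) (dprod_edges E (K_edges n))
     \<longleftrightarrow> n * edge_connectivity V E > min_degree V E"
proof -
  interpret connected_graph_times_complete V E n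
    using assms(1-4) by unfold_locales
  have "dprod_verts V (K_verts n) = VH" by (simp add: dprod_verts_def K_verts_def)
  then show ?thesis
    using product_not_super_edge_connected min_edge_cut_is_star[OF _ assms(5)]
    unfolding super_edge_connected_def by (metis not_le)
qed

end
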